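(* Let $G$ be a simple, undirected, connected graph on $N$ vertices with edge set $E$ and degree sequence $d_1\le d_2\le\cdots\le d_N$. If $d_j=1$ for $1\le j\le M$, where $M<N$, then $$R^+(G)\ge N(N-2)+2|E|\left[M+\frac{(N-M)^2}{2|E|-M}\right]-2|E|.$$
   Context: For vertices $i,j$ of $G$, $R_{ij}$ denotes the effective resistance between $i$ and $j$ when every edge of $G$ is a unit resistor. The additive degree-Kirchhoff index is $R^+(G)=\sum_{i<j}(d_i+d_j)R_{ij}$, where $d_i$ is the degree of vertex $i$. *)

theory Defs
  imports Main "HOL-Library.Transitive_Closure_Table" Complex_Main
begin

definition simple_graph :: "nat \<Rightarrow> (nat \<Rightarrow> nat \<Rightarrow> bool) \<Rightarrow> bool" where
  "simple_graph N E \<longleftrightarrow> (\<forall>i j. E i j \<longrightarrow> i < N \<and> j < N) \<and>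
     (\<forall>i j. E i j \<longrightarrow> E j i) \<and> (\<forall>i. \<not> E i i)"

definition connected_graph :: "nat \<Rightarrow> (nat \<Rightarrow> nat \<Rightarrow> bool) \<Rightarrow> bool" where
  "connected_graph N E \<longleftrightarrow> (\<forall>i<N. \<forall>j<N. E\<^sup>*\<^sup>* i j)"

definition degree :: "nat \<Rightarrow> (nat \<Rightarrow> nat \<Rightarrow> bool) \<Rightarrow> nat \<Rightarrow> nat" where
  "degree N E i = card {j. j < N \<and> E i j}"

definition num_edges :: "nat \<Rightarrow> (nat \<Rightarrow> nat \<Rightarrow> bool) \<Rightarrow> nat" where
  "num_edges N E = card {(i, j). i < j \<and> j < N \<and> E i j}"

text \<open>Effective resistance between i and j with unit resistors on all edges:
  the potential difference v i - v j, where v is a potential satisfying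
  Kirchhoff's laws when a unit current enters at i and leaves at j
  (i.e. L v = e_i - e_j for the graph Laplacian L).\<close>

definition eff_resistance :: "nat \<Rightarrow> (nat \<Rightarrow> nat \<Rightarrow> bool) \<Rightarrow> nat \<Rightarrow> nat \<Rightarrow> real" where
  "eff_resistance N E i j = (THE r. \<exists>v :: nat \<Rightarrow> real.
      (\<forall>x<N. (\<Sum>y\<in>{y. y < N \<and> E x y}. v x - v y) =
              (if x = i then 1 else 0) - (if x = j then 1 else 0)) \<and>
      r = v i - v j)"

definition additive_degree_kirchhoff :: "nat \<Rightarrow> (nat \<Rightarrow> nat \<Rightarrow> bool) \<Rightarrow> real" where
  "additive_degree_kirchhoff N E =
     (\<Sum>j<N. \<Sum>i<j. (real (degree N E i) + real (degree N E j)) * eff_resistance N E i j)"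

end

theory Submission
  imports "Jordan_Normal_Form.Determinant" "HOL-Analysis.Convex" Defs
begin

text \<open>
  For \<open>i \<noteq> j\<close> let \<open>v\<close> be the potential of a unit current from \<open>i\<close> to \<open>j\<close>. Then \<open>R\<^sub>i\<^sub>j\<close> is half
  the energy \<open>\<Sum>\<^sub>x \<Sum>\<^sub>y\<^sub>~\<^sub>x (v x - v y)\<^sup>2\<close>. The currents leaving \<open>i\<close> add up to 1, so by Cauchy-Schwarz
  the part of the energy at \<open>i\<close> is at least \<open>1/d\<^sub>i\<close>; since every edge is counted twice, the
  energies at the vertices of an independent subset of \<open>{i, j}\<close> add up to at most \<open>R\<^sub>i\<^sub>j\<close>.
  Hence \<open>R\<^sub>i\<^sub>j \<ge> 1/d\<^sub>i + 1/d\<^sub>j\<close> for non-adjacent and \<open>R\<^sub>i\<^sub>j \<ge> max (1/d\<^sub>i) (1/d\<^sub>j)\<close> for adjacent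
  vertices, which gives \<open>(d\<^sub>i + d\<^sub>j) R\<^sub>i\<^sub>j \<ge> 2 + d\<^sub>i/d\<^sub>j + d\<^sub>j/d\<^sub>i - 2 [i ~ j]\<close>. Summing over all
  pairs yields \<open>R\<^sup>+ \<ge> N(N - 2) + 2|E| \<Sum> 1/d\<^sub>i - 2|E|\<close>. Finally the \<open>M\<close> pendant vertices contribute
  \<open>M\<close> to \<open>\<Sum> 1/d\<^sub>i\<close>, and by the AM-HM inequality the others contribute at least
  \<open>(N - M)\<^sup>2 / (2|E| - M)\<close>.
\<close>

lemma simple_graph_sym: "simple_graph N E \<Longrightarrow> E x y \<longleftrightarrow> E y x"
  unfolding simple_graph_def by blast

lemma simple_graph_irrefl: "simple_graph N E \<Longrightarrow> \<not> E x x"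
  unfolding simple_graph_def by blast

lemma simple_graph_vertices: "simple_graph N E \<Longrightarrow> E x y \<Longrightarrow> x < N \<and> y < N"
  unfolding simple_graph_def by blast

lemma sum_neighbours_eq_sum_if:
  fixes N :: nat and E :: "nat \<Rightarrow> nat \<Rightarrow> bool"
  shows "(\<Sum>y\<in>{y. y < N \<and> E x y}. f y) = (\<Sum>y<N. if E x y then f y else 0)"
proof -
  have neighbours: "{y. y < N \<and> E x y} = {y\<in>{..<N}. E x y}" by auto
  show ?thesis unfolding neighbours by (subst sum.inter_filter[symmetric]) auto
qed

lemma sum_neighbours_swap:
  assumes "simple_graph N E"
  shows "(\<Sum>x<N. \<Sum>y\<in>{y. y < N \<and> E x y}. g x y) = (\<Sum>x<N. \<Sum>y\<in>{y. y < N \<and> E x y}. g y x)"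
proof -
  have "(\<Sum>x<N. \<Sum>y\<in>{y. y < N \<and> E x y}. g x y) = (\<Sum>y<N. \<Sum>x<N. if E x y then g x y else 0)"
    by (simp add: sum_neighbours_eq_sum_if) (rule sum.swap)
  also have "\<dots> = (\<Sum>y<N. \<Sum>x<N. if E y x then g x y else 0)"
    using simple_graph_sym[OF assms] by simp
  finally show ?thesis by (simp add: sum_neighbours_eq_sum_if)
qed

lemma degree_eq_sum_if: "real (degree N E x) = (\<Sum>y<N. if E x y then 1 else 0)"
  using sum_neighbours_eq_sum_if[of "\<lambda>_. 1 :: real" N E x] by (simp add: degree_def)

lemma degree_ge_1:
  assumes "simple_graph N E" "connected_graph N E" "2 \<le> N" "x < N"
  shows "1 \<le> degree N E x"
proof -
  define y where "y = (if x = 0 then 1 else 0 :: nat)"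
  have "y < N" "y \<noteq> x" using \<open>2 \<le> N\<close> by (auto simp: y_def)
  then have "E\<^sup>*\<^sup>* x y" using assms(2,4) unfolding connected_graph_def by blast
  then obtain z where "E x z" using \<open>y \<noteq> x\<close> by (cases rule: converse_rtranclpE) auto
  then have "z \<in> {z. z < N \<and> E x z}" using simple_graph_vertices[OF assms(1)] by blast
  then have "{z. z < N \<and> E x z} \<noteq> {}" by blast
  then show ?thesis unfolding degree_def by (simp add: Suc_le_eq card_gt_0_iff)
qed

subsection \<open>The graph Laplacian\<close>

definition laplacian :: "nat \<Rightarrow> (nat \<Rightarrow> nat \<Rightarrow> bool) \<Rightarrow> (nat \<Rightarrow> real) \<Rightarrow> nat \<Rightarrow> real" where
  "laplacian N E v x = (\<Sum>y\<in>{y. y < N \<and> E x y}. v x - v y)"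

definition local_energy :: "nat \<Rightarrow> (nat \<Rightarrow> nat \<Rightarrow> bool) \<Rightarrow> (nat \<Rightarrow> real) \<Rightarrow> nat \<Rightarrow> real" where
  "local_energy N E v x = (\<Sum>y\<in>{y. y < N \<and> E x y}. (v x - v y)\<^sup>2)"

definition unit_current :: "nat \<Rightarrow> nat \<Rightarrow> nat \<Rightarrow> real" where
  "unit_current i j x = (if x = i then 1 else 0) - (if x = j then 1 else 0)"

lemma local_energy_nonneg: "0 \<le> local_energy N E v x"
  unfolding local_energy_def by (auto intro: sum_nonneg)

lemma laplacian_diff: "laplacian N E (\<lambda>x. v x - w x) x = laplacian N E v x - laplacian N E w x"
  unfolding laplacian_def by (simp add: sum_subtractf[symmetric] algebra_simps)

lemma laplacian_eq_degree_mult: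
  "laplacian N E v x = real (degree N E x) * v x - (\<Sum>y<N. if E x y then v y else 0)"
  unfolding laplacian_def by (simp add: sum_subtractf degree_def sum_neighbours_eq_sum_if)

lemma sum_laplacian_eq_0:
  assumes "simple_graph N E"
  shows "(\<Sum>x<N. laplacian N E v x) = 0"
proof -
  have "(\<Sum>x<N. laplacian N E v x) = (\<Sum>x<N. \<Sum>y\<in>{y. y < N \<and> E x y}. v y - v x)"
    unfolding laplacian_def by (rule sum_neighbours_swap[OF assms])
  also have "\<dots> = - (\<Sum>x<N. laplacian N E v x)"
    by (simp add: laplacian_def sum_negf[symmetric])
  finally show ?thesis by simp
qed

lemma sum_mult_laplacian_eq_energy:
  assumes "simple_graph N E"
  shows "(\<Sum>x<N. v x * laplacian N E v x) = (\<Sum>x<N. local_energy N E v x) / 2"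
proof -
  have "(\<Sum>x<N. v x * laplacian N E v x) = (\<Sum>x<N. \<Sum>y\<in>{y. y < N \<and> E x y}. v x * (v x - v y))"
    by (simp add: laplacian_def sum_distrib_left)
  moreover have "\<dots> = (\<Sum>x<N. \<Sum>y\<in>{y. y < N \<and> E x y}. v y * (v y - v x))"
    by (rule sum_neighbours_swap[OF assms])
  moreover have "(\<Sum>x<N. \<Sum>y\<in>{y. y < N \<and> E x y}. v x * (v x - v y))
      + (\<Sum>x<N. \<Sum>y\<in>{y. y < N \<and> E x y}. v y * (v y - v x)) = (\<Sum>x<N. local_energy N E v x)"
    by (simp add: local_energy_def sum.distrib[symmetric] power2_eq_square algebra_simps)
  ultimately show ?thesis by linarith
qed

lemma laplacian_eq_0_imp_eq:
  assumes sg: "simple_graph N E" and "connected_graph N E"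
    and harmonic: "\<forall>x<N. laplacian N E u x = 0" and "i < N" "j < N"
  shows "u i = u j"
proof -
  have "(\<Sum>x<N. local_energy N E u x) = 0"
    using sum_mult_laplacian_eq_energy[OF sg, of u] harmonic by simp
  then have "local_energy N E u x = 0" if "x < N" for x
    using that by (simp add: sum_nonneg_eq_0_iff local_energy_nonneg)
  then have edge: "u x = u y" if "E x y" for x y
    using that simple_graph_vertices[OF sg that]
    by (force simp: local_energy_def sum_nonneg_eq_0_iff)
  have "E\<^sup>*\<^sup>* i j" using assms(2,4,5) unfolding connected_graph_def by blast
  then show ?thesis by (induction rule: rtranclp_induct) (auto dest: edge)
qed

text \<open>On a connected graph \<open>L + J\<close> is invertible (\<open>J\<close> the all-ones matrix): a vector in its
  kernel has sum 0 because the columns of \<open>L\<close> sum to 0, hence is harmonic, hence constant.\<close>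

definition laplacian_plus_ones_mat :: "nat \<Rightarrow> (nat \<Rightarrow> nat \<Rightarrow> bool) \<Rightarrow> real mat" where
  "laplacian_plus_ones_mat N E = mat N N (\<lambda>(x, y).
     (if x = y then real (degree N E x) else 0) - (if E x y then 1 else 0) + 1)"

lemma laplacian_plus_ones_mat_carrier: "laplacian_plus_ones_mat N E \<in> carrier_mat N N"
  by (simp add: laplacian_plus_ones_mat_def)

lemma laplacian_plus_ones_mat_mult_vec:
  assumes "x < N"
  shows "(laplacian_plus_ones_mat N E *\<^sub>v vec N f) $ x = laplacian N E f x + (\<Sum>y<N. f y)"
proof -
  have "(laplacian_plus_ones_mat N E *\<^sub>v vec N f) $ x = (\<Sum>y<N.
      ((if x = y then real (degree N E x) else 0) - (if E x y then 1 else 0) + 1) * f y)"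
    using assms by (simp add: laplacian_plus_ones_mat_def scalar_prod_def atLeast0LessThan)
  also have "\<dots> = (\<Sum>y<N.
      (if x = y then real (degree N E x) * f y else 0) - (if E x y then f y else 0) + f y)"
    by (intro sum.cong) (auto simp: algebra_simps)
  also have "\<dots> = real (degree N E x) * f x - (\<Sum>y<N. if E x y then f y else 0) + (\<Sum>y<N. f y)"
    using assms by (simp add: sum.distrib sum_subtractf)
  finally show ?thesis by (simp add: laplacian_eq_degree_mult)
qed

lemma laplacian_plus_sum_eqD:
  assumes "simple_graph N E" "0 < N" "(\<Sum>x<N. b x) = 0"
    and "\<forall>x<N. laplacian N E f x + (\<Sum>y<N. f y) = b x"
  shows "(\<Sum>y<N. f y) = 0" "\<forall>x<N. laplacian N E f x = b x"
proof -
  have "(\<Sum>x<N. b x) = (\<Sum>x<N. laplacian N E f x + (\<Sum>y<N. f y))"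
    using assms(4) by simp
  also have "\<dots> = (\<Sum>x<N. laplacian N E f x) + real N * (\<Sum>y<N. f y)"
    by (simp add: sum.distrib)
  finally have "(\<Sum>x<N. b x) = (\<Sum>x<N. laplacian N E f x) + real N * (\<Sum>y<N. f y)" .
  then show "(\<Sum>y<N. f y) = 0" using assms(2,3) sum_laplacian_eq_0[OF assms(1)] by simp
  with assms(4) show "\<forall>x<N. laplacian N E f x = b x" by simp
qed

lemma det_laplacian_plus_ones_mat_nonzero:
  assumes sg: "simple_graph N E" and cg: "connected_graph N E" and "0 < N"
  shows "det (laplacian_plus_ones_mat N E) \<noteq> 0"
proof -
  have "w = 0\<^sub>v N" if w: "w \<in> carrier_vec N" and kernel: "laplacian_plus_ones_mat N E *\<^sub>v w = 0\<^sub>v N" for w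
  proof -
    define f where "f k = w $ k" for k
    have "vec N f = w" using w by (auto simp: f_def)
    have "laplacian N E f x + (\<Sum>y<N. f y) = 0" if "x < N" for x
      using laplacian_plus_ones_mat_mult_vec[OF that, of E f] kernel \<open>vec N f = w\<close> that by simp
    then have "\<forall>x<N. laplacian N E f x + (\<Sum>y<N. f y) = 0" by blast
    note f = laplacian_plus_sum_eqD[OF sg \<open>0 < N\<close> sum.neutral_const this]
    have const: "f x = f 0" if "x \<in> {..<N}" for x
      using laplacian_eq_0_imp_eq[OF sg cg f(2), of x 0] that \<open>0 < N\<close> by simp
    have "(\<Sum>y<N. f y) = (\<Sum>y<N. f 0)" by (rule sum.cong[OF refl const])
    then have "real N * f 0 = 0" using f(1) by simp
    then have "f x = 0" if "x < N" for x
      using const[of x] that \<open>0 < N\<close> by simp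
    then show ?thesis using w by (intro eq_vecI) (auto simp: f_def)
  qed
  then show ?thesis
    using det_0_iff_vec_prod_zero_field[OF laplacian_plus_ones_mat_carrier] by blast
qed

lemma laplacian_solvable:
  assumes sg: "simple_graph N E" and "connected_graph N E" "0 < N" "(\<Sum>x<N. b x) = 0"
  obtains v where "\<forall>x<N. laplacian N E v x = b x"
proof -
  note carrier = laplacian_plus_ones_mat_carrier[of N E]
  from det_non_zero_imp_unit[OF carrier det_laplacian_plus_ones_mat_nonzero[OF assms(1-3)], of "()"]
  obtain B where B: "B \<in> carrier_mat N N" and inverse: "laplacian_plus_ones_mat N E * B = 1\<^sub>m N"
    by (auto simp: Units_def ring_mat_def)
  define f where "f k = (B *\<^sub>v vec N b) $ k" for k
  have "vec N f = B *\<^sub>v vec N b" using B by (auto simp: f_def)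
  then have "laplacian_plus_ones_mat N E *\<^sub>v vec N f = vec N b"
    using B carrier inverse by (simp add: assoc_mult_mat_vec[symmetric, of _ N N _ N])
  then have "\<forall>x<N. laplacian N E f x + (\<Sum>y<N. f y) = b x"
    by (metis index_vec laplacian_plus_ones_mat_mult_vec)
  then show ?thesis using laplacian_plus_sum_eqD(2)[OF sg assms(3,4)] that by blast
qed

subsection \<open>Effective resistance as an energy\<close>

lemma eff_resistance_eq_potential_drop:
  assumes sg: "simple_graph N E" and cg: "connected_graph N E" and "i < N" "j < N"
    and v: "\<forall>x<N. laplacian N E v x = unit_current i j x"
  shows "eff_resistance N E i j = v i - v j"
  unfolding eff_resistance_def laplacian_def[symmetric] unit_current_def[symmetric]
proof (rule the_equality)
  show "\<exists>w. (\<forall>x<N. laplacian N E w x = unit_current i j x) \<and> v i - v j = w i - w j"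
    using v by blast
next
  fix r
  assume "\<exists>w. (\<forall>x<N. laplacian N E w x = unit_current i j x) \<and> r = w i - w j"
  then obtain w where w: "\<forall>x<N. laplacian N E w x = unit_current i j x" and r: "r = w i - w j"
    by blast
  have "\<forall>x<N. laplacian N E (\<lambda>x. v x - w x) x = 0" using v w by (simp add: laplacian_diff)
  from laplacian_eq_0_imp_eq[OF sg cg this \<open>i < N\<close> \<open>j < N\<close>] show "r = v i - v j"
    using r by simp
qed

lemma eff_resistance_eq_energy:
  assumes sg: "simple_graph N E" and cg: "connected_graph N E" and "i < N" "j < N"
  obtains v where "\<forall>x<N. laplacian N E v x = unit_current i j x"
    and "eff_resistance N E i j = (\<Sum>x<N. local_energy N E v x) / 2"
proof -
  have "(\<Sum>x<N. unit_current i j x) = 0"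
    using assms(3,4) by (simp add: unit_current_def sum_subtractf)
  moreover have "0 < N" using assms(3) by simp
  ultimately obtain v where v: "\<forall>x<N. laplacian N E v x = unit_current i j x"
    using laplacian_solvable[OF sg cg] by blast
  have "eff_resistance N E i j = v i - v j"
    by (rule eff_resistance_eq_potential_drop[OF sg cg assms(3,4) v])
  also have "\<dots> = (\<Sum>x<N. (if x = i then v x else 0) - (if x = j then v x else 0))"
    using assms(3,4) by (simp add: sum_subtractf)
  also have "\<dots> = (\<Sum>x<N. v x * laplacian N E v x)"
    using v by (intro sum.cong) (auto simp: unit_current_def)
  also have "\<dots> = (\<Sum>x<N. local_energy N E v x) / 2"
    by (rule sum_mult_laplacian_eq_energy[OF sg])
  finally show ?thesis using that v by blast
qed

text \<open>An edge contributes \<open>(v x - v y)\<^sup>2\<close> to the local energies of both of its endpoints, but to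
  at most one of them if no edge joins two vertices of \<open>K\<close>.\<close>

lemma sum_local_energy_independent_le:
  assumes sg: "simple_graph N E" and "K \<subseteq> {..<N}"
    and independent: "\<And>x y. x \<in> K \<Longrightarrow> y \<in> K \<Longrightarrow> \<not> E x y"
  shows "2 * (\<Sum>x\<in>K. local_energy N E v x) \<le> (\<Sum>x<N. local_energy N E v x)"
proof -
  define w :: "nat \<Rightarrow> real" where "w x = of_bool (x \<in> K)" for x
  define sq where "sq x y = (v x - v y)\<^sup>2" for x y
  have "(\<Sum>x<N. \<Sum>y\<in>{y. y < N \<and> E x y}. (w x + w y) * sq x y)
      \<le> (\<Sum>x<N. local_energy N E v x)"
    unfolding local_energy_def sq_def using independent
    by (intro sum_mono) (auto simp: w_def intro: mult_left_le_one_le)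
  moreover have "(\<Sum>x<N. \<Sum>y\<in>{y. y < N \<and> E x y}. (w x + w y) * sq x y)
      = (\<Sum>x<N. \<Sum>y\<in>{y. y < N \<and> E x y}. w x * sq x y)
        + (\<Sum>x<N. \<Sum>y\<in>{y. y < N \<and> E x y}. w y * sq x y)"
    by (simp only: distrib_right sum.distrib)
  moreover have "(\<Sum>x<N. \<Sum>y\<in>{y. y < N \<and> E x y}. w y * sq x y)
      = (\<Sum>x<N. \<Sum>y\<in>{y. y < N \<and> E x y}. w x * sq x y)"
    using sum_neighbours_swap[OF sg, of "\<lambda>x y. w y * sq x y"]
    by (simp add: sq_def power2_commute)
  moreover have "(\<Sum>x<N. \<Sum>y\<in>{y. y < N \<and> E x y}. w x * sq x y)
      = (\<Sum>x\<in>K. local_energy N E v x)"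
    using assms(2)
    by (simp add: w_def sq_def local_energy_def sum_distrib_left[symmetric] Int_absorb1)
  ultimately show ?thesis by linarith
qed

lemma local_energy_ge_inverse_degree:
  assumes "\<bar>laplacian N E v x\<bar> = 1"
  shows "1 / real (degree N E x) \<le> local_energy N E v x"
proof -
  have "1 = (laplacian N E v x)\<^sup>2" using assms by (metis power2_abs power_one)
  also have "\<dots> \<le> (\<Sum>y\<in>{y. y < N \<and> E x y}. 1\<^sup>2) * local_energy N E v x"
    using Cauchy_Schwarz_ineq_sum[of "\<lambda>_. 1" "\<lambda>y. v x - v y" "{y. y < N \<and> E x y}"]
    by (simp add: laplacian_def local_energy_def)
  finally have "1 \<le> real (degree N E x) * local_energy N E v x" by (simp add: degree_def)
  then show ?thesis
    by (cases "degree N E x = 0") (auto simp: field_simps)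
qed

lemma eff_resistance_ge_sum_inverse_degrees:
  assumes sg: "simple_graph N E" and cg: "connected_graph N E"
    and "i < N" "j < N" "i \<noteq> j" "K \<subseteq> {i, j}"
    and independent: "\<And>x y. x \<in> K \<Longrightarrow> y \<in> K \<Longrightarrow> \<not> E x y"
  shows "(\<Sum>x\<in>K. 1 / real (degree N E x)) \<le> eff_resistance N E i j"
proof -
  obtain v where v: "\<forall>x<N. laplacian N E v x = unit_current i j x"
    and R: "eff_resistance N E i j = (\<Sum>x<N. local_energy N E v x) / 2"
    using eff_resistance_eq_energy[OF sg cg assms(3,4)] by blast
  have "(\<Sum>x\<in>K. 1 / real (degree N E x)) \<le> (\<Sum>x\<in>K. local_energy N E v x)"
  proof (rule sum_mono)
    fix x assume "x \<in> K"
    then have "x = i \<or> x = j" "x < N" using assms(3,4,6) by auto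
    then have "\<bar>laplacian N E v x\<bar> = 1"
      using v \<open>i \<noteq> j\<close> by (auto simp: unit_current_def)
    then show "1 / real (degree N E x) \<le> local_energy N E v x"
      by (rule local_energy_ge_inverse_degree)
  qed
  also have "\<dots> \<le> (\<Sum>x<N. local_energy N E v x) / 2"
  proof -
    have "K \<subseteq> {..<N}" using assms(3,4,6) by auto
    from sum_local_energy_independent_le[OF sg this independent, of v] show ?thesis by simp
  qed
  finally show ?thesis using R by simp
qed

lemma ratio_sum_le_of_inverse_le:
  fixes p q R :: real
  assumes "1 \<le> p" "p \<le> q" "1 / p \<le> R"
  shows "p / q + q / p \<le> (p + q) * R"
proof -
  have "p / q + q / p \<le> (p + q) * (1 / p)" using assms by (simp add: field_simps)
  also have "\<dots> \<le> (p + q) * R" using assms by (intro mult_left_mono) auto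
  finally show ?thesis .
qed

lemma degree_weighted_resistance_ge:
  assumes sg: "simple_graph N E" and cg: "connected_graph N E"
    and "i < N" "j < N" "i \<noteq> j"
  defines "p \<equiv> real (degree N E i)" and "q \<equiv> real (degree N E j)"
  shows "2 + p / q + q / p - (if E i j then 2 else 0) \<le> (p + q) * eff_resistance N E i j"
proof -
  have "1 \<le> p" "1 \<le> q" using degree_ge_1[OF sg cg] assms(3-5) by (auto simp: p_def q_def)
  note R_ge = eff_resistance_ge_sum_inverse_degrees[OF sg cg assms(3-5)]
  show ?thesis
  proof (cases "E i j")
    case True
    have "1 / p \<le> eff_resistance N E i j" "1 / q \<le> eff_resistance N E i j"
      using R_ge[of "{i}"] R_ge[of "{j}"] simple_graph_irrefl[OF sg] by (auto simp: p_def q_def)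
    then show ?thesis
      using True ratio_sum_le_of_inverse_le[of p q] ratio_sum_le_of_inverse_le[of q p]
        \<open>1 \<le> p\<close> \<open>1 \<le> q\<close> by (cases "p \<le> q") (auto simp: add.commute)
  next
    case False
    have "1 / p + 1 / q \<le> eff_resistance N E i j"
      using R_ge[of "{i, j}"] False simple_graph_irrefl[OF sg] simple_graph_sym[OF sg]
        \<open>i \<noteq> j\<close> by (auto simp: p_def q_def)
    then have "(p + q) * (1 / p + 1 / q) \<le> (p + q) * eff_resistance N E i j"
      using \<open>1 \<le> p\<close> \<open>1 \<le> q\<close> by (intro mult_left_mono) auto
    then show ?thesis using False \<open>1 \<le> p\<close> \<open>1 \<le> q\<close> by (simp add: field_simps)
  qed
qed

subsection \<open>Summation over pairs of vertices\<close>

lemma sum_symmetric_pairs: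
  fixes g :: "nat \<Rightarrow> nat \<Rightarrow> 'a::comm_semiring_1"
  assumes "\<And>i j. g i j = g j i"
  shows "(\<Sum>i<N. \<Sum>j<N. g i j) = 2 * (\<Sum>j<N. \<Sum>i<j. g i j) + (\<Sum>i<N. g i i)"
proof (induction N)
  case (Suc N)
  have "(\<Sum>i<Suc N. \<Sum>j<Suc N. g i j)
      = (\<Sum>i<N. \<Sum>j<N. g i j) + (\<Sum>i<N. g i N) + (\<Sum>j<N. g N j) + g N N"
    by (simp add: sum.distrib ac_simps)
  also have "(\<Sum>j<N. g N j) = (\<Sum>i<N. g i N)" using assms by simp
  finally show ?case using Suc by (simp add: algebra_simps mult_2)
qed simp

lemma num_edges_eq_sum: "real (num_edges N E) = (\<Sum>j<N. \<Sum>i<j. if E i j then 1 else 0)"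
proof -
  have "{(i, j). i < j \<and> j < N \<and> E i j} = prod.swap ` (SIGMA j:{..<N}. {i. i < j \<and> E i j})"
    by auto
  then have "num_edges N E = card (SIGMA j:{..<N}. {i. i < j \<and> E i j})"
    unfolding num_edges_def by (simp add: card_image)
  also have "\<dots> = (\<Sum>j<N. card {i. i < j \<and> E i j})" by (rule card_SigmaI) auto
  moreover have "real (card {i. i < j \<and> E i j}) = (\<Sum>i<j. if E i j then 1 else 0)" for j
    using sum_neighbours_eq_sum_if[of "\<lambda>_. 1 :: real" j "\<lambda>_ i. E i j"] by simp
  ultimately show ?thesis by simp
qed

lemma sum_degree_eq_twice_num_edges:
  assumes "simple_graph N E"
  shows "(\<Sum>x<N. real (degree N E x)) = 2 * real (num_edges N E)"
proof -
  have "(\<Sum>x<N. real (degree N E x)) = (\<Sum>x<N. \<Sum>y<N. if E x y then 1 else 0)"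
    by (simp add: degree_eq_sum_if)
  also have "\<dots> = 2 * (\<Sum>j<N. \<Sum>i<j. if E i j then 1 else 0) + (\<Sum>i<N. if E i i then 1 else 0)"
    by (rule sum_symmetric_pairs) (simp add: simple_graph_sym[OF assms])
  finally show ?thesis by (simp add: simple_graph_irrefl[OF assms] num_edges_eq_sum)
qed

lemma sum_pairs_ratio_eq:
  fixes f :: "nat \<Rightarrow> real"
  assumes nonzero: "\<And>x. x < N \<Longrightarrow> f x \<noteq> 0"
    and sym: "\<And>x y. E x y \<longleftrightarrow> E y x" and irrefl: "\<And>x. \<not> E x x"
  shows "(\<Sum>j<N. \<Sum>i<j. 2 + f i / f j + f j / f i - (if E i j then 2 else 0))
    = real N * (real N - 2) + (\<Sum>x<N. f x) * (\<Sum>x<N. 1 / f x)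
      - (\<Sum>i<N. \<Sum>j<N. if E i j then 1 else 0)"
proof -
  define g where "g i j = 2 + f i / f j + f j / f i - (if E i j then 2 else 0)" for i j
  define F where "F = (\<Sum>x<N. f x)"
  define S where "S = (\<Sum>x<N. 1 / f x)"
  have "(\<Sum>i<N. g i i) = 4 * real N" using nonzero by (simp add: g_def irrefl)
  moreover have "(\<Sum>i<N. \<Sum>j<N. g i j) = 2 * real N ^ 2 + 2 * (F * S)
      - 2 * (\<Sum>i<N. \<Sum>j<N. if E i j then 1 else 0)"
  proof -
    have "(\<Sum>i<N. \<Sum>j<N. g i j) = (\<Sum>i<N. \<Sum>j<N. 2 + f i * (1 / f j) + f j * (1 / f i)
        - 2 * (if E i j then 1 else 0))"
      by (intro sum.cong refl) (simp add: g_def)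
    also have "\<dots> = (\<Sum>i<N. \<Sum>j<N. 2) + (\<Sum>i<N. \<Sum>j<N. f i * (1 / f j))
        + (\<Sum>i<N. \<Sum>j<N. f j * (1 / f i)) - 2 * (\<Sum>i<N. \<Sum>j<N. if E i j then 1 else 0)"
      by (simp add: sum.distrib sum_subtractf sum_distrib_left)
    also have "(\<Sum>i<N. \<Sum>j<N. f i * (1 / f j)) = F * S"
      by (simp add: F_def S_def sum_product)
    also have "(\<Sum>i<N. \<Sum>j<N. f j * (1 / f i)) = (\<Sum>j<N. \<Sum>i<N. f j * (1 / f i))"
      by (rule sum.swap)
    also have "\<dots> = F * S"
      by (simp add: F_def S_def sum_product)
    finally show ?thesis by (simp add: power2_eq_square)
  qed
  moreover have "(\<Sum>i<N. \<Sum>j<N. g i j) = 2 * (\<Sum>j<N. \<Sum>i<j. g i j) + (\<Sum>i<N. g i i)"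
    by (rule sum_symmetric_pairs) (simp add: g_def sym)
  ultimately show ?thesis by (simp add: g_def F_def S_def power2_eq_square algebra_simps)
qed

lemma additive_degree_kirchhoff_ge:
  assumes sg: "simple_graph N E" and cg: "connected_graph N E" and "2 \<le> N"
  shows "real N * (real N - 2) + 2 * real (num_edges N E) * (\<Sum>x<N. 1 / real (degree N E x))
    - 2 * real (num_edges N E) \<le> additive_degree_kirchhoff N E"
proof -
  have "(\<Sum>x<N. \<Sum>y<N. if E x y then 1 else 0) = 2 * real (num_edges N E)"
    using sum_degree_eq_twice_num_edges[OF sg] by (simp add: degree_eq_sum_if)
  then have "real N * (real N - 2) + 2 * real (num_edges N E) * (\<Sum>x<N. 1 / real (degree N E x))
      - 2 * real (num_edges N E) = (\<Sum>j<N. \<Sum>i<j. 2 + real (degree N E i) / real (degree N E j)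
        + real (degree N E j) / real (degree N E i) - (if E i j then 2 else 0))"
    using sum_pairs_ratio_eq[of N "\<lambda>x. real (degree N E x)" E] degree_ge_1[OF sg cg \<open>2 \<le> N\<close>]
      simple_graph_sym[OF sg] simple_graph_irrefl[OF sg] sum_degree_eq_twice_num_edges[OF sg]
    by fastforce
  also have "\<dots> \<le> additive_degree_kirchhoff N E"
    unfolding additive_degree_kirchhoff_def
    by (intro sum_mono degree_weighted_resistance_ge[OF sg cg]) auto
  finally show ?thesis .
qed

subsection \<open>The pendant vertices\<close>

lemma card_squared_le_sum_mult_sum_inverse:
  fixes x :: "'a \<Rightarrow> real"
  assumes "\<And>a. a \<in> K \<Longrightarrow> 0 < x a"
  shows "(real (card K))\<^sup>2 \<le> (\<Sum>a\<in>K. x a) * (\<Sum>a\<in>K. 1 / x a)"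
proof -
  have "x a \<noteq> 0" if "a \<in> K" for a using assms[OF that] by simp
  then have "(\<Sum>a\<in>K. sqrt (x a) * (1 / sqrt (x a))) = (\<Sum>a\<in>K. 1)"
    by (intro sum.cong) auto
  then have card: "(\<Sum>a\<in>K. sqrt (x a) * (1 / sqrt (x a))) = real (card K)" by simp
  have squares: "(\<Sum>a\<in>K. (sqrt (x a))\<^sup>2) = (\<Sum>a\<in>K. x a)"
      "(\<Sum>a\<in>K. (1 / sqrt (x a))\<^sup>2) = (\<Sum>a\<in>K. 1 / x a)"
    using assms by (auto intro!: sum.cong simp: power_divide less_imp_le)
  show ?thesis
    using Cauchy_Schwarz_ineq_sum[of "\<lambda>a. sqrt (x a)" "\<lambda>a. 1 / sqrt (x a)" K]
    unfolding card squares .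
qed

lemma sum_inverse_ge_of_ones_on_subset:
  fixes x :: "'a \<Rightarrow> real"
  assumes "finite A" "P \<subseteq> A" "\<And>a. a \<in> P \<Longrightarrow> x a = 1" and pos: "\<And>a. a \<in> A \<Longrightarrow> 0 < x a"
  shows "real (card P) + (real (card (A - P)))\<^sup>2 / ((\<Sum>a\<in>A. x a) - real (card P))
    \<le> (\<Sum>a\<in>A. 1 / x a)"
proof -
  have "(\<Sum>a\<in>A. x a) = (\<Sum>a\<in>A - P. x a) + real (card P)"
    "(\<Sum>a\<in>A. 1 / x a) = (\<Sum>a\<in>A - P. 1 / x a) + real (card P)"
    using assms(1-3) by (simp_all add: sum.subset_diff[of P A])
  moreover have "(real (card (A - P)))\<^sup>2 / (\<Sum>a\<in>A - P. x a) \<le> (\<Sum>a\<in>A - P. 1 / x a)"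
  proof (cases "A - P = {}")
    case False
    then have "0 < (\<Sum>a\<in>A - P. x a)" using assms(1) pos by (intro sum_pos) auto
    then show ?thesis
      using card_squared_le_sum_mult_sum_inverse[of "A - P" x] pos
      by (simp add: divide_le_eq mult.commute)
  next
    case True
    then show ?thesis unfolding True by simp
  qed
  ultimately show ?thesis by simp
qed

theorem corollary3:
  fixes N M :: nat and E :: "nat \<Rightarrow> nat \<Rightarrow> bool" and d :: "nat \<Rightarrow> nat"
  assumes "simple_graph N E"
    and "connected_graph N E"
    and "bij_betw d {1..N} {0..<N}"
    and "\<And>a b. \<lbrakk>a \<in> {1..N}; b \<in> {1..N}; a \<le> b\<rbrakk> \<Longrightarrow> degree N E (d a) \<le> degree N E (d b)"
    and "\<And>j. \<lbrakk>1 \<le> j; j \<le> M\<rbrakk> \<Longrightarrow> degree N E (d j) = 1"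
    and "M < N"
  shows "additive_degree_kirchhoff N E \<ge>
    real N * (real N - 2)
    + 2 * real (num_edges N E) * (real M + (real N - real M)^2 / (2 * real (num_edges N E) - real M))
    - 2 * real (num_edges N E)"
proof (cases "N = 1")
  case True
  then have "{(i, j). i < j \<and> j < N \<and> E i j} = {}" by auto
  then have "num_edges N E = 0" unfolding num_edges_def by (simp only: card.empty)
  then show ?thesis using True by (simp add: additive_degree_kirchhoff_def)
next
  case False
  with \<open>M < N\<close> have "2 \<le> N" by simp
  let ?P = "d ` {1..M}"
  have "inj_on d {1..M}" "?P \<subseteq> {..<N}"
    using assms(3,6) by (auto simp: bij_betw_def inj_on_subset atLeast0LessThan)
  then have "card ?P = M" "real (card ({..<N} - ?P)) = real N - real M"
    using \<open>M < N\<close> by (simp_all add: card_image card_Diff_subset)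
  then have "real M + (real N - real M)\<^sup>2 / (2 * real (num_edges N E) - real M)
      \<le> (\<Sum>x<N. 1 / real (degree N E x))"
    using sum_inverse_ge_of_ones_on_subset[of "{..<N}" ?P "\<lambda>x. real (degree N E x)"]
      \<open>?P \<subseteq> {..<N}\<close> assms(5) degree_ge_1[OF assms(1,2) \<open>2 \<le> N\<close>]
      sum_degree_eq_twice_num_edges[OF assms(1)]
    by fastforce
  then show ?thesis
    using additive_degree_kirchhoff_ge[OF assms(1,2) \<open>2 \<le> N\<close>]
      mult_left_mono[of _ _ "2 * real (num_edges N E)"] by fastforce
qed

end
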